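(* Let $L_5=\{-3,-2,-1,0,1\}$ with its natural linear order. Define the games $\star=\{-1\mid -3\}$, and for any game $G$: $\mathsf{M}(G)=\{1\mid G\}$, $\mathsf{P}(G)=\{G\mid -2\}$, $\mathsf{P}_\star(G)=\{G\mid \star\}$. For $n\in\mathbb{N}$ let $\mathsf{P}_n(G)=\mathsf{P}(G)$ if $n$ is odd and $\mathsf{P}_n(G)=\mathsf{P}_\star(G)$ if $n$ is even. Define $G_0=0$ (the atomic game $[0]$) and $G_{n+1}=\mathsf{M}(\mathsf{P}_n(G_n))$. Then for every $n\ge 0$, $G_n\le G_{n+1}$.
   Context: Games over a poset $A$ of atoms are defined inductively: for each $a\in A$, $[a]$ is a game (atomic; often written simply $a$); whenever $L,R$ are non-empty sets of games, $\{L\mid R\}$ is a game (composite), with left options the elements of $L$ and right options the elements of $R$; $\{G_1,\dots,G_n\mid H_1,\dots,H_m\}$ denotes $\{\{G_1,\dots,G_n\}\mid\{H_1,\dots,H_m\}\}$. Relations $\le$ and $\lhd$ on games are defined by mutual recursion: $G\le H$ iff (1) every left option $G^L$ of $G$ satisfies $G^L\lhd H$, (2) every right option $H^R$ of $H$ satisfies $G\lhd H^R$, and (3) if $G$ or $H$ is atomic then $G\lhd H$. $G\lhd H$ iff (1) some right option $G^R$ of $G$ satisfies $G^R\le H$, or (2) some left option $H^L$ of $H$ satisfies $G\le H^L$, or (3) $G=[a]$, $H=[b]$ are atomic with $a\le b$ in $A$. *)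

theory Defs
  imports Main "HOL-Library.FSet"
begin

text \<open>Games over a poset of atoms. Options are finite sets (all games in the
statement are finite); the composite constructor is meant to be used with
non-empty option sets.\<close>

datatype 'a game = Atom 'a | Comp "'a game fset" "'a game fset"

fun lefts :: "'a game \<Rightarrow> 'a game fset" where
  "lefts (Atom a) = {||}"
| "lefts (Comp L R) = L"

fun rights :: "'a game \<Rightarrow> 'a game fset" where
  "rights (Atom a) = {||}"
| "rights (Comp L R) = R"

fun is_atom :: "'a game \<Rightarrow> bool" where
  "is_atom (Atom a) = True"
| "is_atom (Comp L R) = False"

text \<open>All recursive occurrences are positive and the recursion is well-founded, so
the inductive (least fixed point) definition coincides with the recursive one.\<close>

inductive game_le :: "'a::order game \<Rightarrow> 'a game \<Rightarrow> bool"
  and game_lf :: "'a::order game \<Rightarrow> 'a game \<Rightarrow> bool" where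
  le_intro: "\<lbrakk>\<forall>GL. GL |\<in>| lefts G \<longrightarrow> game_lf GL H;
              \<forall>HR. HR |\<in>| rights H \<longrightarrow> game_lf G HR;
              (is_atom G \<or> is_atom H) \<longrightarrow> game_lf G H\<rbrakk> \<Longrightarrow> game_le G H"
| lf_right: "\<lbrakk>GR |\<in>| rights G; game_le GR H\<rbrakk> \<Longrightarrow> game_lf G H"
| lf_left: "\<lbrakk>HL |\<in>| lefts H; game_le G HL\<rbrakk> \<Longrightarrow> game_lf G H"
| lf_atom: "a \<le> b \<Longrightarrow> game_lf (Atom a) (Atom b)"

text \<open>Atoms: L5 = {-3,-2,-1,0,1} realised as integers (order = restriction of int order).\<close>

definition star :: "int game" where
  "star = Comp {|Atom (-1)|} {|Atom (-3)|}"

definition gM :: "int game \<Rightarrow> int game" where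
  "gM G = Comp {|Atom 1|} {|G|}"

definition gP :: "int game \<Rightarrow> int game" where
  "gP G = Comp {|G|} {|Atom (-2)|}"

definition gPstar :: "int game \<Rightarrow> int game" where
  "gPstar G = Comp {|G|} {|star|}"

definition gPn :: "nat \<Rightarrow> int game \<Rightarrow> int game" where
  "gPn n G = (if odd n then gP G else gPstar G)"

fun Gseq :: "nat \<Rightarrow> int game" where
  "Gseq 0 = Atom 0"
| "Gseq (Suc n) = gM (gPn n (Gseq n))"

end

theory Submission
  imports Defs
begin

text \<open>Only the outer shape \<open>G\<^sub>n\<^sub>+\<^sub>1 = {1 | X}\<close> with \<open>X = P\<^sub>n(G\<^sub>n)\<close> matters: \<open>G\<^sub>n\<close> is a
left option of \<open>X\<close>, hence \<open>G\<^sub>n \<lhd> X\<close>, which handles the unique right option of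
\<open>G\<^sub>n\<^sub>+\<^sub>1\<close>. On the left, \<open>G\<^sub>n\<close> is either the atom \<open>0 \<le> 1\<close> or has the single left
option \<open>1\<close>, and both are answered by the left option \<open>1\<close> of \<open>G\<^sub>n\<^sub>+\<^sub>1\<close>.\<close>

lemma game_le_Atom_Atom:
  assumes "a \<le> b"
  shows "game_le (Atom a) (Atom b)"
  by (rule le_intro) (simp_all add: assms lf_atom)

lemma game_le_refl: "game_le (G::'a::order game) G"
proof (induction G)
  case (Atom a)
  show ?case by (rule game_le_Atom_Atom) simp
next
  case (Comp L R)
  show ?case
  proof (rule le_intro)
    show "\<forall>GL. GL |\<in>| lefts (Comp L R) \<longrightarrow> game_lf GL (Comp L R)"
      using Comp.IH(1) lf_left by fastforce
    show "\<forall>GR. GR |\<in>| rights (Comp L R) \<longrightarrow> game_lf (Comp L R) GR"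
      using Comp.IH(2) lf_right by fastforce
  qed simp
qed

lemma game_lf_left_option:
  assumes "GL |\<in>| lefts G"
  shows "game_lf GL G"
  using lf_left[OF assms game_le_refl] .

lemma game_lf_gPn: "game_lf G (gPn n G)"
  by (rule game_lf_left_option) (simp add: gPn_def gP_def gPstar_def)

lemma Atom_le_gM:
  assumes "a \<le> 1" and "game_lf (Atom a) X"
  shows "game_le (Atom a) (gM X)"
proof (rule le_intro)
  have "game_le (Atom a) (Atom 1)"
    using assms(1) by (rule game_le_Atom_Atom)
  then show "is_atom (Atom a) \<or> is_atom (gM X) \<longrightarrow> game_lf (Atom a) (gM X)"
    using lf_left[of "Atom 1" "gM X"] by (simp add: gM_def)
qed (simp_all add: assms(2) gM_def)

lemma gM_le_gM:
  assumes "game_lf (gM Y) X"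
  shows "game_le (gM Y) (gM X)"
proof (rule le_intro)
  show "\<forall>GL. GL |\<in>| lefts (gM Y) \<longrightarrow> game_lf GL (gM X)"
    using game_lf_left_option[of "Atom 1" "gM X"] by (simp add: gM_def)
  show "\<forall>HR. HR |\<in>| rights (gM X) \<longrightarrow> game_lf (gM Y) HR"
    using assms by (simp add: gM_def)
qed (simp add: gM_def)

theorem lemma3p2:
  fixes n :: nat
  shows "game_le (Gseq n) (Gseq (Suc n))"
proof (cases n)
  case 0
  then show ?thesis
    using Atom_le_gM[OF _ game_lf_gPn] by simp
next
  case (Suc m)
  have "game_lf (gM (gPn m (Gseq m))) (gPn n (Gseq n))"
    using game_lf_gPn[of "Gseq n" n] Suc by simp
  then show ?thesis
    using gM_le_gM Suc by simp
qed

end
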